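(* Let $m\ge3$ and $s$ be odd positive integers, $n=sm$, and $\Gamma=C_n[mK_1]$. Define $$\sigma_1=(1,1,\dots,1,tc^{-1})r,\qquad \sigma_2=(t,\alpha_2,\alpha_3,\dots,\alpha_n)z \text{ with } \alpha_i=c^{(-1)^{i-1}(2i-3)}\ (2\le i\le n),$$ i.e. $\sigma_2=(t,c^{-1},c^{3},c^{-5},\dots,c^{5},c^{-3})z$, and $G=\langle\sigma_1,\sigma_2\rangle$. Then $\sigma_1$ has order $2n$, $\sigma_2$ has order $2m$, $\sigma_1\sigma_2$ has order $2$, and $|G|=4m^2n$.
   Context: $C_n[mK_1]$ is the graph with vertex set $\{1,\dots,n\}\times\{1,\dots,m\}$ in which $(i_1,j_1)$ is adjacent to $(i_2,j_2)$ if and only if $i_1\equiv i_2\pm1\pmod n$ (residues mod $n$ taken in $\{1,\dots,n\}$). Permutations act on the right ($x\alpha$ is the image of $x$) and products are composed left to right, both in $S_m$ and in $\mathrm{Aut}(\Gamma)$. For $\alpha_1,\dots,\alpha_n\in S_m$ and a permutation $x$ of $\{1,\dots,n\}$ in the dihedral group $D_n=\langle r,z\rangle$, $(\alpha_1,\dots,\alpha_n)x$ denotes the automorphism of $\Gamma$ mapping $(i,j)\mapsto(ix,\,j\alpha_i)$; $1$ denotes an identity permutation. Here $c=(1\,2\,\cdots\,m)\in S_m$; $t\in S_m$ fixes $1$ and maps $j\mapsto m-j+2$ for $2\le j\le m$; $r$ is the permutation $i\mapsto i+1 \pmod n$ of $\{1,\dots,n\}$; and $z$ fixes $1$ and maps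 $j\mapsto n-j+2$ for $2\le j\le n$. *)

theory Defs
  imports "HOL-Algebra.Algebra"
begin

definition vset :: "nat \<Rightarrow> nat \<Rightarrow> (nat \<times> nat) set" where
  "vset n m = {1..n} \<times> {1..m}"

text \<open>c^k for integer k, where c = (1 2 ... m); acting on {1..m}.\<close>
definition cpow :: "nat \<Rightarrow> int \<Rightarrow> nat \<Rightarrow> nat" where
  "cpow m k j = nat ((int j - 1 + k) mod int m) + 1"

definition tperm :: "nat \<Rightarrow> nat \<Rightarrow> nat" where
  "tperm m j = (if j = 1 then 1 else m + 2 - j)"

definition rperm :: "nat \<Rightarrow> nat \<Rightarrow> nat" where
  "rperm n i = (i mod n) + 1"

definition zperm :: "nat \<Rightarrow> nat \<Rightarrow> nat" where
  "zperm n i = (if i = 1 then 1 else n + 2 - i)"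

text \<open>sigma_1 = (1,...,1,t c^{-1}) r; right actions composed left to right,
  so j (t c^{-1}) = cpow m (-1) (tperm m j).  Given as the
  restriction to the vertex set (element of BijGroup).\<close>
definition sigma1 :: "nat \<Rightarrow> nat \<Rightarrow> (nat \<times> nat) \<Rightarrow> (nat \<times> nat)" where
  "sigma1 n m = (\<lambda>(i, j) \<in> vset n m.
     (rperm n i, if i = n then cpow m (-1) (tperm m j) else j))"

definition sigma2 :: "nat \<Rightarrow> nat \<Rightarrow> (nat \<times> nat) \<Rightarrow> (nat \<times> nat)" where
  "sigma2 n m = (\<lambda>(i, j) \<in> vset n m.
     (zperm n i, if i = 1 then tperm m j
                 else cpow m ((-1) ^ (i - 1) * (2 * int i - 3)) j))"

end

theory Submission
  imports Defs
begin

text \<open>Give the vertex (i, j) the coordinates x = i - 1 in Z/n and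
  y = (-1)^(i-1) (j - 1 + (m+1)/2) in Z/m.  The alternating sign and the offset (m+1)/2, the
  inverse of 2 modulo m, turn sigma_1 and sigma_2 into the affine maps (x, y) |-> (x + 1, -y) and
  (x, y) |-> (-x, -y - 2x + 1).  Since m divides n, all maps (x, y) |-> (+-x + u, +-y + bx + g)
  are well defined and form a group of order 2n * 2m * m, in which the orders of sigma_1,
  sigma_2 and sigma_1 sigma_2 are read off from explicit powers.  That group is generated by
  the two sigmas: sigma_1^n flips y, and combining it with sigma_1, sigma_2 and their squares
  yields the flip of x, the translations in x and in y and the shear (x, y) |-> (x, y + x).\<close>

definition sgn_bool :: "bool \<Rightarrow> int" where
  "sgn_bool e = (if e then -1 else 1)"

lemma sgn_bool_simps [simp]: "sgn_bool True = -1" "sgn_bool False = 1"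
  by (simp_all add: sgn_bool_def)

type_synonym affine_par = "bool \<times> int \<times> bool \<times> int \<times> int"

fun affine_map :: "nat \<Rightarrow> nat \<Rightarrow> affine_par \<Rightarrow> int \<times> int \<Rightarrow> int \<times> int" where
  "affine_map n m (e, u, d, b, g) (x, y) =
     ((sgn_bool e * x + u) mod int n, (sgn_bool d * y + b * x + g) mod int m)"

fun affine_comp :: "affine_par \<Rightarrow> affine_par \<Rightarrow> affine_par" where
  "affine_comp (e', u', d', b', g') (e, u, d, b, g) =
     (e \<noteq> e', sgn_bool e' * u + u', d \<noteq> d', sgn_bool d' * b + b' * sgn_bool e,
      sgn_bool d' * g + b' * u + g')"

fun affine_inv :: "affine_par \<Rightarrow> affine_par" where
  "affine_inv (e, u, d, b, g) =
     (e, - sgn_bool e * u, d, - sgn_bool d * sgn_bool e * b,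
      - sgn_bool d * g + sgn_bool d * sgn_bool e * b * u)"

abbreviation affine_id :: affine_par where
  "affine_id \<equiv> (False, 0, False, 0, 0)"

definition residues :: "nat \<Rightarrow> nat \<Rightarrow> (int \<times> int) set" where
  "residues n m = {0..<int n} \<times> {0..<int m}"

lemma affine_comp_inv_left [simp]: "affine_comp (affine_inv p) p = affine_id"
  by (cases p) (auto simp: sgn_bool_def)

lemma affine_comp_inv_right [simp]: "affine_comp p (affine_inv p) = affine_id"
  by (cases p) (auto simp: sgn_bool_def)

lemma affine_map_in_residues: "0 < n \<Longrightarrow> 0 < m \<Longrightarrow> affine_map n m p w \<in> residues n m"
  by (cases p; cases w) (simp add: residues_def)

lemma affine_map_id: "w \<in> residues n m \<Longrightarrow> affine_map n m affine_id w = w"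
  by (cases w) (simp add: residues_def)

lemma affine_map_comp:
  assumes "m dvd n"
  shows "affine_map n m q (affine_map n m p w) = affine_map n m (affine_comp q p) w"
proof -
  obtain e u d b g where p: "p = (e, u, d, b, g)" by (cases p)
  obtain e' u' d' b' g' where q: "q = (e', u', d', b', g')" by (cases q)
  obtain x y where w: "w = (x, y)" by (cases w)
  have "(sgn_bool e' * ((sgn_bool e * x + u) mod int n) + u') mod int n
      = (sgn_bool e' * (sgn_bool e * x + u) + u') mod int n"
    by (metis mod_add_left_eq mod_mult_right_eq)
  moreover have "(sgn_bool d' * ((sgn_bool d * y + b * x + g) mod int m)
        + b' * ((sgn_bool e * x + u) mod int n) + g') mod int m
      = (sgn_bool d' * (sgn_bool d * y + b * x + g) + b' * (sgn_bool e * x + u) + g') mod int m"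
  proof -
    have "(sgn_bool e * x + u) mod int n mod int m = (sgn_bool e * x + u) mod int m"
      using assms by (simp add: mod_mod_cancel)
    then show ?thesis
      by (metis (no_types) mod_add_left_eq mod_add_right_eq mod_mult_right_eq)
  qed
  ultimately show ?thesis
    using p q w by (cases e; cases e'; cases d; cases d') (simp_all add: algebra_simps)
qed

lemma affine_map_cong:
  assumes "u mod int n = u' mod int n" "b mod int m = b' mod int m" "g mod int m = g' mod int m"
  shows "affine_map n m (e, u, d, b, g) = affine_map n m (e, u', d, b', g')"
proof
  fix w :: "int \<times> int"
  obtain x y where w: "w = (x, y)" by (cases w)
  have "(sgn_bool e * x + u) mod int n = (sgn_bool e * x + u') mod int n"
    using assms(1) by (metis mod_add_right_eq)
  moreover have "(sgn_bool d * y + b * x + g) mod int m = (sgn_bool d * y + b' * x + g') mod int m"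
  proof -
    have "int m dvd (b - b') * x + (g - g')"
      using assms(2,3) by (simp add: mod_eq_dvd_iff)
    then show ?thesis
      by (simp add: mod_eq_dvd_iff algebra_simps)
  qed
  ultimately show "affine_map n m (e, u, d, b, g) w = affine_map n m (e, u', d, b', g') w"
    using w by simp
qed

lemma sgn_bool_cong_imp_eq:
  assumes "3 \<le> M" "(sgn_bool d + g) mod int M = (sgn_bool d' + g') mod int M"
    and "g mod int M = g' mod int M"
  shows "d = d'"
proof (rule ccontr)
  assume "d \<noteq> d'"
  have "int M dvd (sgn_bool d + g) - (sgn_bool d' + g')" "int M dvd g - g'"
    using assms(2,3) by (simp_all add: mod_eq_dvd_iff)
  then have "int M dvd sgn_bool d - sgn_bool d'"
    using dvd_diff[of "int M" "(sgn_bool d + g) - (sgn_bool d' + g')" "g - g'"] by simp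
  then have "int M dvd 2"
    using \<open>d \<noteq> d'\<close> by (cases d) (simp_all add: sgn_bool_def)
  then show False
    using assms(1) zdvd_imp_le[of "int M" 2] by simp
qed

lemma affine_map_eq_on_residues_iff:
  assumes "3 \<le> n" "3 \<le> m"
  shows "(\<forall>w\<in>residues n m. affine_map n m (e, u, d, b, g) w = affine_map n m (e', u', d', b', g') w)
    \<longleftrightarrow> e = e' \<and> d = d' \<and> u mod int n = u' mod int n \<and> b mod int m = b' mod int m
        \<and> g mod int m = g' mod int m" (is "?eq \<longleftrightarrow> ?pars")
proof
  assume eq: ?eq
  have "(0, 0) \<in> residues n m" "(0, 1) \<in> residues n m" "(1, 0) \<in> residues n m"
    using assms by (auto simp: residues_def)
  note at = this[THEN bspec[OF eq]]
  have u: "u mod int n = u' mod int n" and g: "g mod int m = g' mod int m"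
    using at(1) by simp_all
  have d: "(sgn_bool d + g) mod int m = (sgn_bool d' + g') mod int m"
    using at(2) by simp
  have e: "(sgn_bool e + u) mod int n = (sgn_bool e' + u') mod int n"
    and b: "(b + g) mod int m = (b' + g') mod int m"
    using at(3) by simp_all
  have "b mod int m = b' mod int m"
    using b g by (metis add_diff_cancel_right' mod_diff_eq)
  then show ?pars
    using sgn_bool_cong_imp_eq[OF assms(1) e u] sgn_bool_cong_imp_eq[OF assms(2) d g] u g by simp
next
  assume ?pars
  then show ?eq
    using affine_map_cong[of u n u' b m b' g g' e d] by simp
qed

lemma cpow_range: "0 < m \<Longrightarrow> 0 < cpow m k j \<and> cpow m k j \<le> m"
  by (simp add: cpow_def Suc_le_eq nat_less_iff)

lemma tperm_range: "1 \<le> j \<Longrightarrow> j \<le> m \<Longrightarrow> 0 < tperm m j \<and> tperm m j \<le> m"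
  by (auto simp: tperm_def)

lemma rperm_range: "0 < n \<Longrightarrow> 0 < rperm n i \<and> rperm n i \<le> n"
  by (simp add: rperm_def Suc_le_eq)

lemma zperm_range: "1 \<le> i \<Longrightarrow> i \<le> n \<Longrightarrow> 0 < zperm n i \<and> zperm n i \<le> n"
  by (auto simp: zperm_def)

lemma cpow_shifted: "0 < m \<Longrightarrow> int (cpow m k j) - 1 = (int j - 1 + k) mod int m"
  by (simp add: cpow_def)

lemma tperm_shifted: "1 \<le> j \<Longrightarrow> j \<le> m \<Longrightarrow> int (tperm m j) - 1 = (1 - int j) mod int m"
proof (cases "j = 1")
  case False
  assume "1 \<le> j" "j \<le> m"
  have "(1 - int j) mod int m = (int m + 1 - int j) mod int m"
    by (simp add: mod_eq_dvd_iff)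
  also have "\<dots> = int m + 1 - int j"
    using False \<open>1 \<le> j\<close> \<open>j \<le> m\<close> by (intro mod_pos_pos_trivial) auto
  finally show ?thesis
    using False \<open>j \<le> m\<close> by (simp add: tperm_def)
qed (simp add: tperm_def)

lemma rperm_shifted: "int (rperm n i) - 1 = int i mod int n"
  by (simp add: rperm_def of_nat_mod)

lemma zperm_shifted: "1 \<le> i \<Longrightarrow> i \<le> n \<Longrightarrow> int (zperm n i) - 1 = (1 - int i) mod int n"
  unfolding zperm_def tperm_def[symmetric] by (rule tperm_shifted)

lemma (in group) ord_eq_2_if_involution:
  assumes "x \<in> carrier G" "x \<noteq> \<one>" "x \<otimes> x = \<one>"
  shows "ord x = 2"
proof -
  have "x [^] (2::nat) = \<one>"
    using assms by (simp add: numeral_2_eq_2)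
  then have "ord x dvd 2"
    using assms(1) pow_eq_id by blast
  moreover have "ord x \<noteq> 1"
    using assms ord_eq_1 by blast
  ultimately show ?thesis
    using dvd_imp_le[of "ord x" 2] by (cases "ord x") (auto simp: less_Suc_eq_le le_Suc_eq)
qed

lemma even_and_dvd_iff_double_dvd:
  fixes a k :: nat
  assumes "odd a"
  shows "even k \<and> a dvd k \<longleftrightarrow> 2 * a dvd k"
proof
  assume k: "even k \<and> a dvd k"
  then obtain t where t: "k = a * t"
    by blast
  with k assms obtain s where "t = 2 * s"
    by auto
  then show "2 * a dvd k"
    using t by simp
qed auto

locale odd_cycle_blowup =
  fixes n m :: nat
  assumes odd_m: "odd m" and m_ge_3: "3 \<le> m" and odd_n: "odd n" and m_dvd_n: "m dvd n"
begin

lemma m_pos: "0 < m"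
  using m_ge_3 by simp

lemma n_ge_3: "3 \<le> n"
  using m_ge_3 m_dvd_n odd_n dvd_imp_le[of m n] by (cases "n = 0") auto

definition half :: int where
  "half = (int m + 1) div 2"

lemma two_half: "2 * half = int m + 1"
  using odd_m by (auto simp: half_def elim!: oddE)

fun coord :: "nat \<times> nat \<Rightarrow> int \<times> int" where
  "coord (i, j) = (int i - 1, ((-1) ^ (i - 1) * (int j - 1 + half)) mod int m)"

fun vertex :: "int \<times> int \<Rightarrow> nat \<times> nat" where
  "vertex (x, y) = (nat x + 1, nat (((-1) ^ nat x * y - half) mod int m) + 1)"

lemma coord_in_residues: "v \<in> vset n m \<Longrightarrow> coord v \<in> residues n m"
  using m_pos by (cases v) (auto simp: vset_def residues_def)

lemma vertex_in_vset: "w \<in> residues n m \<Longrightarrow> vertex w \<in> vset n m"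
proof (cases w)
  case (Pair x y)
  assume "w \<in> residues n m"
  moreover have "nat (((-1) ^ nat x * y - half) mod int m) < m"
    using m_pos by (simp add: nat_less_iff)
  ultimately show ?thesis
    using Pair by (auto simp: vset_def residues_def)
qed

lemma vertex_coord: "v \<in> vset n m \<Longrightarrow> vertex (coord v) = v"
proof (cases v)
  case (Pair i j)
  assume "v \<in> vset n m"
  then have i: "1 \<le> i" and j: "1 \<le> j" "j \<le> m"
    using Pair by (auto simp: vset_def)
  have "((-1) ^ (i - 1) * (((-1) ^ (i - 1) * (int j - 1 + half)) mod int m) - half) mod int m
      = ((-1) ^ (i - 1) * ((-1) ^ (i - 1) * (int j - 1 + half)) - half) mod int m"
    by (metis mod_diff_left_eq mod_mult_right_eq)
  also have "\<dots> = int j - 1"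
    using j by simp
  moreover have "nat (int i - 1) = i - 1"
    using i by simp
  ultimately show ?thesis
    using Pair i j by simp
qed

lemma coord_vertex: "w \<in> residues n m \<Longrightarrow> coord (vertex w) = w"
proof (cases w)
  case (Pair x y)
  assume "w \<in> residues n m"
  then have x: "0 \<le> x" and y: "0 \<le> y" "y < int m"
    using Pair by (auto simp: residues_def)
  have "((-1) ^ nat x * ((((-1) ^ nat x * y - half) mod int m) + half)) mod int m
      = ((-1) ^ nat x * (((-1) ^ nat x * y - half) + half)) mod int m"
    by (metis mod_add_left_eq mod_mult_right_eq)
  also have "\<dots> = y"
    using y by simp
  finally show ?thesis
    using Pair x m_pos by simp
qed

definition affine_perm :: "affine_par \<Rightarrow> nat \<times> nat \<Rightarrow> nat \<times> nat" where
  "affine_perm p = (\<lambda>v\<in>vset n m. vertex (affine_map n m p (coord v)))"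

abbreviation Sym :: "((nat \<times> nat) \<Rightarrow> (nat \<times> nat)) monoid" where
  "Sym \<equiv> BijGroup (vset n m)"

lemma affine_perm_in_vset: "v \<in> vset n m \<Longrightarrow> affine_perm p v \<in> vset n m"
  using m_pos n_ge_3 by (simp add: affine_perm_def vertex_in_vset affine_map_in_residues)

lemma coord_affine_perm: "v \<in> vset n m \<Longrightarrow> coord (affine_perm p v) = affine_map n m p (coord v)"
  using m_pos n_ge_3 by (simp add: affine_perm_def coord_vertex affine_map_in_residues)

lemma affine_perm_comp_apply:
  "v \<in> vset n m \<Longrightarrow> affine_perm q (affine_perm p v) = affine_perm (affine_comp q p) v"
proof -
  assume v: "v \<in> vset n m"
  have "affine_perm q (affine_perm p v) = vertex (affine_map n m q (coord (affine_perm p v)))"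
    using affine_perm_in_vset[OF v] by (simp add: affine_perm_def)
  also have "\<dots> = affine_perm (affine_comp q p) v"
    using v m_dvd_n by (simp add: coord_affine_perm affine_map_comp) (simp add: affine_perm_def)
  finally show ?thesis .
qed

lemma affine_perm_id: "affine_perm affine_id = (\<lambda>v\<in>vset n m. v)"
  unfolding affine_perm_def
  by (rule restrict_ext) (simp add: affine_map_id coord_in_residues vertex_coord)

lemma affine_perm_carrier: "affine_perm p \<in> carrier Sym"
proof -
  have "bij_betw (affine_perm p) (vset n m) (vset n m)"
    by (rule bij_betw_byWitness[where f' = "affine_perm (affine_inv p)"])
      (auto simp: affine_perm_comp_apply affine_perm_id affine_perm_in_vset)
  then show ?thesis
    by (simp add: BijGroup_def Bij_def affine_perm_def)
qed

lemma affine_perm_mult: "affine_perm q \<otimes>\<^bsub>Sym\<^esub> affine_perm p = affine_perm (affine_comp q p)"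
proof -
  have "compose (vset n m) (affine_perm q) (affine_perm p) = affine_perm (affine_comp q p)"
    by (rule ext) (simp add: compose_def affine_perm_comp_apply, simp add: affine_perm_def)
  then show ?thesis
    using affine_perm_carrier by (simp add: BijGroup_def)
qed

lemma affine_perm_one: "\<one>\<^bsub>Sym\<^esub> = affine_perm affine_id"
  by (simp add: BijGroup_def affine_perm_id)

lemma affine_perm_eq_iff:
  "affine_perm (e, u, d, b, g) = affine_perm (e', u', d', b', g')
    \<longleftrightarrow> e = e' \<and> d = d' \<and> u mod int n = u' mod int n \<and> b mod int m = b' mod int m
        \<and> g mod int m = g' mod int m"
proof -
  have "affine_perm p = affine_perm q \<longleftrightarrow> (\<forall>w\<in>residues n m. affine_map n m p w = affine_map n m q w)"
    for p q
  proof
    assume eq: "affine_perm p = affine_perm q"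
    have "affine_map n m r w = coord (affine_perm r (vertex w))" if "w \<in> residues n m" for r w
      using that by (simp add: coord_affine_perm vertex_in_vset coord_vertex)
    then show "\<forall>w\<in>residues n m. affine_map n m p w = affine_map n m q w"
      using eq by simp
  next
    assume "\<forall>w\<in>residues n m. affine_map n m p w = affine_map n m q w"
    then show "affine_perm p = affine_perm q"
      unfolding affine_perm_def by (intro restrict_ext) (simp add: coord_in_residues)
  qed
  then show ?thesis
    using affine_map_eq_on_residues_iff[OF n_ge_3 m_ge_3] by presburger
qed

lemma affine_perm_eqI:
  assumes "f \<in> extensional (vset n m)"
    and "\<And>v. v \<in> vset n m \<Longrightarrow> f v \<in> vset n m \<and> coord (f v) = affine_map n m p (coord v)"
  shows "f = affine_perm p"
proof (rule extensionalityI[OF assms(1)])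
  show "affine_perm p \<in> extensional (vset n m)"
    by (simp add: affine_perm_def)
  fix v assume "v \<in> vset n m"
  then show "f v = affine_perm p v"
    using assms(2) vertex_coord by (metis affine_perm_def restrict_apply')
qed

lemma coord_sigma1:
  assumes "v \<in> vset n m"
  shows "coord (sigma1 n m v) = affine_map n m (False, 1, True, 0, 0) (coord v)"
proof -
  obtain i j where v: "v = (i, j)" and i: "1 \<le> i" "i \<le> n" and j: "1 \<le> j" "j \<le> m"
    using assms by (cases v) (auto simp: vset_def)
  show ?thesis
  proof (cases "i = n")
    case False
    then have "rperm n i = Suc i" "int i mod int n = int i" "(-1::int) ^ i = - ((-1) ^ (i - 1))"
      using i by (simp_all add: rperm_def power_eq_if)
    then show ?thesis
      using v assms False by (simp add: sigma1_def rperm_shifted mod_simps)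
  next
    case True
    let ?j = "cpow m (-1) (tperm m j)"
    have "(int ?j - 1 + half) mod int m = (half - int j) mod int m"
      using m_pos j by (simp add: cpow_shifted tperm_shifted mod_simps)
    also have "\<dots> = (- (int j - 1 + half)) mod int m"
      using two_half by (simp add: mod_eq_dvd_iff)
    finally have y: "(int ?j - 1 + half) mod int m = (- (int j - 1 + half)) mod int m" .
    have "(-1::int) ^ (n - 1) = 1"
      using odd_n n_ge_3 by simp
    then show ?thesis
      using v assms True y by (simp add: sigma1_def rperm_def mod_simps)
  qed
qed

lemma coord_sigma2:
  assumes "v \<in> vset n m"
  shows "coord (sigma2 n m v) = affine_map n m (True, 0, True, -2, 1) (coord v)"
proof -
  obtain i j where v: "v = (i, j)" and i: "1 \<le> i" "i \<le> n" and j: "1 \<le> j" "j \<le> m"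
    using assms by (cases v) (auto simp: vset_def)
  show ?thesis
  proof (cases "i = 1")
    case True
    have "(int (tperm m j) - 1 + half) mod int m = (1 - int j + half) mod int m"
      using j by (simp add: tperm_shifted mod_simps)
    also have "\<dots> = (1 - (int j - 1 + half)) mod int m"
      using two_half by (simp add: mod_eq_dvd_iff)
    finally show ?thesis
      using v assms True by (simp add: sigma2_def zperm_def mod_simps)
  next
    case False
    define s :: int where "s = (-1) ^ (i - 1)"
    let ?j = "cpow m (s * (2 * int i - 3)) j"
    have "zperm n i - 1 = (n - i) + 1"
      using False i by (simp add: zperm_def)
    moreover have "even (n - i + 1) \<longleftrightarrow> odd (i - 1)"
      using odd_n i by (auto simp: even_diff_nat)
    ultimately have sign: "(-1::int) ^ (zperm n i - 1) = - s"
      using odd_n i by (auto simp: s_def minus_one_power_iff)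
    have ss: "s * (s * x) = x" for x
      by (simp add: s_def)
    have "(- s * (int ?j - 1 + half)) mod int m
        = (- s * (int j - 1 + s * (2 * int i - 3) + half)) mod int m"
      unfolding cpow_shifted[OF m_pos] by (metis mod_add_left_eq mod_mult_right_eq)
    also have "\<dots> = (1 - 2 * (int i - 1) - s * (int j - 1 + half)) mod int m"
      by (simp add: algebra_simps ss)
    also have "\<dots> = (1 - 2 * (int i - 1) - s * (int j - 1 + half) mod int m) mod int m"
      by (simp add: mod_diff_right_eq)
    finally have y: "(- s * (int ?j - 1 + half)) mod int m
        = (1 - 2 * (int i - 1) - s * (int j - 1 + half) mod int m) mod int m" .
    show ?thesis
      using v assms False i sign y unfolding s_def
      by (simp add: sigma2_def zperm_shifted algebra_simps)
  qed
qed

lemma sigma1_eq: "sigma1 n m = affine_perm (False, 1, True, 0, 0)"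
proof (rule affine_perm_eqI)
  show "sigma1 n m \<in> extensional (vset n m)"
    by (simp add: sigma1_def)
  fix v assume v: "v \<in> vset n m"
  then have "sigma1 n m v \<in> vset n m"
    using m_pos n_ge_3 by (auto simp: sigma1_def vset_def Suc_le_eq rperm_range cpow_range)
  then show "sigma1 n m v \<in> vset n m \<and> coord (sigma1 n m v) = affine_map n m (False, 1, True, 0, 0) (coord v)"
    using coord_sigma1[OF v] by simp
qed

lemma sigma2_eq: "sigma2 n m = affine_perm (True, 0, True, -2, 1)"
proof (rule affine_perm_eqI)
  show "sigma2 n m \<in> extensional (vset n m)"
    by (simp add: sigma2_def)
  fix v assume v: "v \<in> vset n m"
  then have "sigma2 n m v \<in> vset n m"
    using m_pos by (auto simp: sigma2_def vset_def Suc_le_eq zperm_range tperm_range cpow_range)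
  then show "sigma2 n m v \<in> vset n m \<and> coord (sigma2 n m v) = affine_map n m (True, 0, True, -2, 1) (coord v)"
    using coord_sigma2[OF v] by simp
qed

lemma affine_perm_inv: "inv\<^bsub>Sym\<^esub> affine_perm p = affine_perm (affine_inv p)"
  by (rule group.inv_equality[OF group_BijGroup])
    (simp_all add: affine_perm_carrier affine_perm_mult affine_perm_one)

lemma affine_perm_subgroup: "subgroup (range affine_perm) Sym"
  by (rule group.subgroupI[OF group_BijGroup])
    (auto simp: affine_perm_carrier affine_perm_inv affine_perm_mult)

definition normal_pars :: "affine_par set" where
  "normal_pars = UNIV \<times> {0..<int n} \<times> UNIV \<times> {0..<int m} \<times> {0..<int m}"

lemma range_affine_perm: "range affine_perm = affine_perm ` normal_pars"
proof (intro equalityI subsetI)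
  fix f assume "f \<in> range affine_perm"
  then obtain e u d b g where f: "f = affine_perm (e, u, d, b, g)"
    by auto
  have "affine_perm (e, u, d, b, g) = affine_perm (e, u mod int n, d, b mod int m, g mod int m)"
    by (simp add: affine_perm_eq_iff)
  moreover have "(e, u mod int n, d, b mod int m, g mod int m) \<in> normal_pars"
    using m_pos n_ge_3 by (simp add: normal_pars_def)
  ultimately show "f \<in> affine_perm ` normal_pars"
    using f by blast
qed auto

lemma inj_on_affine_perm: "inj_on affine_perm normal_pars"
  by (auto simp: inj_on_def normal_pars_def affine_perm_eq_iff)

lemma card_range_affine_perm: "card (range affine_perm) = 4 * m^2 * n"
proof -
  have "card normal_pars = 2 * n * (2 * (m * m))"
    by (simp add: normal_pars_def card_cartesian_product)
  then show ?thesis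
    by (simp add: range_affine_perm card_image[OF inj_on_affine_perm] power2_eq_square)
qed

lemma sigma1_pow: "sigma1 n m [^]\<^bsub>Sym\<^esub> k = affine_perm (False, int k, odd k, 0, 0)"
  by (induction k) (simp_all add: sigma1_eq affine_perm_one affine_perm_mult)

lemma sigma2_pow:
  "sigma2 n m [^]\<^bsub>Sym\<^esub> k =
     affine_perm (odd k, 0, odd k, if odd k then -2 * int k else 2 * int k, if odd k then 1 else 0)"
  by (induction k) (auto simp: sigma2_eq affine_perm_one affine_perm_mult algebra_simps)

lemma ord_sigma1: "group.ord Sym (sigma1 n m) = 2 * n"
proof -
  have "sigma1 n m [^]\<^bsub>Sym\<^esub> k = \<one>\<^bsub>Sym\<^esub> \<longleftrightarrow> 2 * n dvd k" for k
    using even_and_dvd_iff_double_dvd[OF odd_n, of k]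
    by (simp add: sigma1_pow affine_perm_one affine_perm_eq_iff flip: dvd_eq_mod_eq_0)
  then show ?thesis
    by (simp add: group.ord_unique[OF group_BijGroup] sigma1_eq affine_perm_carrier)
qed

lemma ord_sigma2: "group.ord Sym (sigma2 n m) = 2 * m"
proof -
  have "int m dvd 2 * int k \<longleftrightarrow> m dvd k" for k
    using odd_m by (metis coprime_dvd_mult_right_iff coprime_right_2_iff_odd int_dvd_int_iff of_nat_mult of_nat_numeral)
  then have "sigma2 n m [^]\<^bsub>Sym\<^esub> k = \<one>\<^bsub>Sym\<^esub> \<longleftrightarrow> 2 * m dvd k" for k
    using even_and_dvd_iff_double_dvd[OF odd_m, of k]
    by (auto simp: sigma2_pow affine_perm_one affine_perm_eq_iff simp flip: dvd_eq_mod_eq_0)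
  then show ?thesis
    by (simp add: group.ord_unique[OF group_BijGroup] sigma2_eq affine_perm_carrier)
qed

lemma ord_sigma2_sigma1: "group.ord Sym (sigma2 n m \<otimes>\<^bsub>Sym\<^esub> sigma1 n m) = 2"
proof -
  have prod: "sigma2 n m \<otimes>\<^bsub>Sym\<^esub> sigma1 n m = affine_perm (True, -1, False, -2, -1)"
    by (simp add: sigma1_eq sigma2_eq affine_perm_mult)
  show ?thesis
    unfolding prod
    by (rule group.ord_eq_2_if_involution[OF group_BijGroup])
      (simp_all add: affine_perm_carrier affine_perm_mult affine_perm_one affine_perm_eq_iff)
qed

abbreviation G :: "((nat \<times> nat) \<Rightarrow> (nat \<times> nat)) set" where
  "G \<equiv> generate Sym {sigma1 n m, sigma2 n m}"

lemma G_subgroup: "subgroup G Sym"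
  by (rule group.generate_is_subgroup[OF group_BijGroup])
    (simp add: sigma1_eq sigma2_eq affine_perm_carrier)

lemma G_subset_range_affine_perm: "G \<subseteq> range affine_perm"
  by (rule group.generate_subgroup_incl[OF group_BijGroup _ affine_perm_subgroup])
    (auto simp: sigma1_eq sigma2_eq)

lemma affine_perm_comp_in_G:
  "affine_perm p \<in> G \<Longrightarrow> affine_perm q \<in> G \<Longrightarrow> affine_perm (affine_comp p q) \<in> G"
  using subgroup.m_closed[OF G_subgroup] by (fastforce simp: affine_perm_mult)

lemma pow_in_G: "x \<in> G \<Longrightarrow> x [^]\<^bsub>Sym\<^esub> (k::nat) \<in> G"
  by (induction k) (simp_all add: subgroup.one_closed[OF G_subgroup] subgroup.m_closed[OF G_subgroup])

lemma translation_pow: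
  "affine_perm (False, u, False, 0, g) [^]\<^bsub>Sym\<^esub> k = affine_perm (False, int k * u, False, 0, int k * g)"
  by (induction k) (simp_all add: affine_perm_one affine_perm_mult algebra_simps)

lemma shear_pow:
  "affine_perm (False, 0, False, b, 0) [^]\<^bsub>Sym\<^esub> k = affine_perm (False, 0, False, int k * b, 0)"
  by (induction k) (simp_all add: affine_perm_one affine_perm_mult algebra_simps)

lemma sigma1_in_G: "affine_perm (False, 1, True, 0, 0) \<in> G"
  unfolding sigma1_eq[symmetric] by (rule generate.incl) simp

lemma sigma2_in_G: "affine_perm (True, 0, True, -2, 1) \<in> G"
  unfolding sigma2_eq[symmetric] by (rule generate.incl) simp

lemma flip_y_in_G: "affine_perm (False, 0, True, 0, 0) \<in> G"
proof -
  have "affine_perm (False, 0, True, 0, 0) = sigma1 n m [^]\<^bsub>Sym\<^esub> n"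
    using odd_n by (simp add: sigma1_pow affine_perm_eq_iff)
  then show ?thesis
    using pow_in_G[OF sigma1_in_G, of n] by (simp add: sigma1_eq)
qed

lemma translate_x_in_G: "affine_perm (False, u, False, 0, 0) \<in> G"
proof -
  have step: "affine_perm (False, 1, False, 0, 0) \<in> G"
    using affine_perm_comp_in_G[OF sigma1_in_G flip_y_in_G] by simp
  have "affine_perm (False, u, False, 0, 0) = affine_perm (False, 1, False, 0, 0) [^]\<^bsub>Sym\<^esub> nat (u mod int n)"
    using n_ge_3 by (simp add: translation_pow affine_perm_eq_iff)
  then show ?thesis
    using pow_in_G[OF step] by simp
qed

lemma reflect_in_G: "affine_perm (True, 0, False, -2, 1) \<in> G"
  using affine_perm_comp_in_G[OF sigma2_in_G flip_y_in_G] by simp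

lemma translate_y_in_G: "affine_perm (False, 0, False, 0, g) \<in> G"
proof -
  have step: "affine_perm (False, 0, False, 0, 2) \<in> G"
    using affine_perm_comp_in_G[OF reflect_in_G reflect_in_G] by simp
  let ?k = "nat (half * g mod int m)"
  have "(int ?k * 2) mod int m = (2 * half * g) mod int m"
    using m_pos by (simp add: mod_simps ac_simps)
  also have "\<dots> = ((int m + 1) * g) mod int m"
    by (simp only: two_half)
  also have "\<dots> = g mod int m"
    by (simp add: algebra_simps)
  finally have "affine_perm (False, 0, False, 0, g) = affine_perm (False, 0, False, 0, 2) [^]\<^bsub>Sym\<^esub> ?k"
    by (simp add: translation_pow affine_perm_eq_iff)
  then show ?thesis
    using pow_in_G[OF step] by simp
qed

lemma shear_in_G: "affine_perm (False, 0, False, b, 0) \<in> G"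
proof -
  have step: "affine_perm (False, 0, False, 4, 0) \<in> G"
    using affine_perm_comp_in_G[OF sigma2_in_G sigma2_in_G] by simp
  let ?k = "nat (half * half * b mod int m)"
  have "(int ?k * 4) mod int m = ((2 * half) * (2 * half) * b) mod int m"
    using m_pos by (simp add: mod_simps ac_simps)
  also have "\<dots> = ((int m + 1) * (int m + 1) * b) mod int m"
    by (simp only: two_half)
  also have "\<dots> = (b + int m * ((int m + 2) * b)) mod int m"
    by (simp add: algebra_simps)
  also have "\<dots> = b mod int m"
    by simp
  finally have "affine_perm (False, 0, False, b, 0) = affine_perm (False, 0, False, 4, 0) [^]\<^bsub>Sym\<^esub> ?k"
    by (simp add: shear_pow affine_perm_eq_iff)
  then show ?thesis
    using pow_in_G[OF step] by simp
qed

lemma flip_x_in_G: "affine_perm (True, 0, False, 0, 0) \<in> G"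
  using affine_perm_comp_in_G[OF translate_y_in_G
      affine_perm_comp_in_G[OF reflect_in_G shear_in_G], of "-1" 2]
  by simp

lemma affine_perm_in_G: "affine_perm p \<in> G"
proof -
  obtain e u d b g where p: "p = (e, u, d, b, g)"
    by (cases p)
  have id: "affine_perm affine_id \<in> G"
    using subgroup.one_closed[OF G_subgroup] by (simp add: affine_perm_one)
  have "affine_perm (False, 0, d, 0, 0) \<in> G" "affine_perm (e, 0, False, 0, 0) \<in> G"
    using id flip_y_in_G flip_x_in_G by (cases d; cases e; simp)+
  then have "affine_perm (affine_comp (affine_comp (False, u, False, 0, 0) (False, 0, False, 0, g))
      (affine_comp (False, 0, False, sgn_bool e * b, 0) (affine_comp (False, 0, d, 0, 0) (e, 0, False, 0, 0))))
    \<in> G"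
    by (intro affine_perm_comp_in_G translate_x_in_G translate_y_in_G shear_in_G)
  moreover have "sgn_bool e * b * sgn_bool e = b"
    by (cases e) simp_all
  ultimately show ?thesis
    using p by simp
qed

lemma G_eq_range_affine_perm: "G = range affine_perm"
  using G_subset_range_affine_perm affine_perm_in_G by blast

end

theorem lemma5p1:
  fixes m s n :: nat
  assumes "odd m" and "3 \<le> m" and "odd s" and "0 < s" and "n = s * m"
  shows "group.ord (BijGroup (vset n m)) (sigma1 n m) = 2 * n \<and>
          group.ord (BijGroup (vset n m)) (sigma2 n m) = 2 * m \<and>
          group.ord (BijGroup (vset n m))
           (sigma2 n m \<otimes>\<^bsub>BijGroup (vset n m)\<^esub> sigma1 n m) = 2 \<and>
          card (generate (BijGroup (vset n m)) {sigma1 n m, sigma2 n m}) = 4 * m^2 * n"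
proof -
  interpret odd_cycle_blowup n m
    using assms by unfold_locales auto
  show ?thesis
    using ord_sigma1 ord_sigma2 ord_sigma2_sigma1 card_range_affine_perm
    by (simp add: G_eq_range_affine_perm)
qed

end
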